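(* Let $N=2^\ell$ ($\ell$ a positive integer), $\omega=e^{2\pi\mathbf{i}/N}$, and let $C_2\subseteq C_1\subseteq\mathbb{F}_2^n$ be linear codes with bases $\beta_2\subseteq\beta_1$, respectively, and $Q=Q(C_1,C_2)$. Assume $\beta_1\setminus\beta_2=\{w_1,\ldots,w_K\}$, used as the encoding of $Q$, and let $b\in H_N$. For nonempty $J=\{j_1,\ldots,j_h\}\subseteq[K]$ define $$a_{J,b}=(-2)^{h-1}\, b\cdot(w_{j_1}\star\cdots\star w_{j_h})\bmod N.$$ Then the logical action of $U(b)$ is $$\overline{U(b)}=\prod_{h=1}^K\ \prod_{\substack{J\subseteq[K]\\ |J|=h}} C_J\text{-}U(a_{J,b}).$$
   Context: Vectors of $\mathbb{F}_2^n$ are lifted to $\{0,1\}^n\subseteq\mathbb{Z}_N^n$, $\star$ is the componentwise product, and $b\cdot x=\sum_ib_ix_i\bmod N$. $U(a)=\mathrm{diag}(1,\omega^a)$, $U(b)=\bigotimes_iU(b_i)$. $Q(C_1,C_2)$ is the subspace of $(\mathbb{C}^2)^{\otimes n}$ stabilized by all $X(u)Z(v)$, $u\in C_2$, $v\in C_1^\perp$; $H_N=\{b\in\mathbb{Z}_N^n:U(b)Q=Q\}$. The logical states are $|v\rangle_L=|C_2|^{-1/2}\sum_{u\in C_2}|u+\sum_iv_iw_i\rangle$ for $v\in\mathbb{F}_2^K$, and the logical action of $U$ with $UQ=Q$ is $\mathcal{E}^{-1}U\mathcal{E}$ on $(\mathbb{C}^2)^{\otimes K}$ with $\mathcal{E}:|v\rangle\mapsto|v\rangle_L$.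 For $v\in\mathbb{F}_2^K$ and $J\subseteq[K]$, $v_J=\prod_{i\in J}v_i$, and for $a\in\mathbb{Z}_N$ the controlled gate on $(\mathbb{C}^2)^{\otimes K}$ is $C_J\text{-}U(a)=\sum_{v:\,v_J=0}|v\rangle\langle v|+\omega^a\sum_{v:\,v_J=1}|v\rangle\langle v|$. *)

theory Defs
  imports Complex_Main
begin

text \<open>A vector of F_2^m is a function nat => bool vanishing outside {..<m}.\<close>

definition vecs :: "nat \<Rightarrow> (nat \<Rightarrow> bool) set" where
  "vecs m = {v. \<forall>i\<ge>m. \<not> v i}"

definition vzero :: "nat \<Rightarrow> bool" where
  "vzero = (\<lambda>_. False)"

definition vadd :: "(nat \<Rightarrow> bool) \<Rightarrow> (nat \<Rightarrow> bool) \<Rightarrow> (nat \<Rightarrow> bool)" where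
  "vadd u v = (\<lambda>i. u i \<noteq> v i)"

definition vsum :: "(nat \<Rightarrow> bool) set \<Rightarrow> (nat \<Rightarrow> bool)" where
  "vsum S = (\<lambda>i. odd (card {v\<in>S. v i}))"

text \<open>F_2-span: over F_2 linear combinations are exactly sums of finite subsets.\<close>
definition span2 :: "(nat \<Rightarrow> bool) set \<Rightarrow> (nat \<Rightarrow> bool) set" where
  "span2 B = {vsum S | S. finite S \<and> S \<subseteq> B}"

definition indep2 :: "(nat \<Rightarrow> bool) set \<Rightarrow> bool" where
  "indep2 B \<longleftrightarrow> (\<forall>S. finite S \<and> S \<subseteq> B \<and> vsum S = vzero \<longrightarrow> S = {})"

definition linear_code :: "nat \<Rightarrow> (nat \<Rightarrow> bool) set \<Rightarrow> bool" where
  "linear_code n C \<longleftrightarrow> C \<subseteq> vecs n \<and> vzero \<in> C \<and> (\<forall>u\<in>C. \<forall>v\<in>C. vadd u v \<in> C)"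

definition is_basis2 :: "(nat \<Rightarrow> bool) set \<Rightarrow> (nat \<Rightarrow> bool) set \<Rightarrow> bool" where
  "is_basis2 B C \<longleftrightarrow> B \<subseteq> C \<and> indep2 B \<and> span2 B = C"

definition dual_code :: "nat \<Rightarrow> (nat \<Rightarrow> bool) set \<Rightarrow> (nat \<Rightarrow> bool) set" where
  "dual_code n C = {v \<in> vecs n. \<forall>c\<in>C. even (card {i. i < n \<and> v i \<and> c i})}"

text \<open>A state of m qubits is a function on F_2^m (amplitudes of computational basis
  states), represented as a complex-valued function on nat => bool vanishing outside vecs m.\<close>

type_synonym qstate = "(nat \<Rightarrow> bool) \<Rightarrow> complex"
type_synonym qop = "qstate \<Rightarrow> qstate"

definition is_qstate :: "nat \<Rightarrow> qstate \<Rightarrow> bool" where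
  "is_qstate m \<psi> \<longleftrightarrow> (\<forall>v. v \<notin> vecs m \<longrightarrow> \<psi> v = 0)"

definition ket :: "(nat \<Rightarrow> bool) \<Rightarrow> qstate" where
  "ket y = (\<lambda>x. if x = y then 1 else 0)"

definition omega :: "nat \<Rightarrow> complex" where
  "omega N = cis (2 * pi / real N)"

definition opow :: "nat \<Rightarrow> int \<Rightarrow> complex" where
  "opow N a = omega N ^ nat (a mod int N)"

text \<open>U(b) = tensor product of the single-qubit gates diag(1, omega^(b_i)) on n qubits.\<close>
definition Uop :: "nat \<Rightarrow> nat \<Rightarrow> (nat \<Rightarrow> int) \<Rightarrow> qop" where
  "Uop N n b \<psi> = (\<lambda>x. (\<Prod>i<n. if x i then opow N (b i) else 1) * \<psi> x)"

definition Xop :: "(nat \<Rightarrow> bool) \<Rightarrow> qop" where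
  "Xop u \<psi> = (\<lambda>x. \<psi> (vadd x u))"

definition Zop :: "nat \<Rightarrow> (nat \<Rightarrow> bool) \<Rightarrow> qop" where
  "Zop n v \<psi> = (\<lambda>x. (-1) ^ card {i. i < n \<and> v i \<and> x i} * \<psi> x)"

definition QCSS :: "nat \<Rightarrow> (nat \<Rightarrow> bool) set \<Rightarrow> (nat \<Rightarrow> bool) set \<Rightarrow> qstate set" where
  "QCSS n C1 C2 = {\<psi>. is_qstate n \<psi> \<and>
      (\<forall>u\<in>C2. \<forall>v\<in>dual_code n C1. Xop u (Zop n v \<psi>) = \<psi>)}"

definition H_N :: "nat \<Rightarrow> nat \<Rightarrow> (nat \<Rightarrow> bool) set \<Rightarrow> (nat \<Rightarrow> bool) set \<Rightarrow> (nat \<Rightarrow> int) set" where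
  "H_N N n C1 C2 = {b. (\<forall>i<n. 0 \<le> b i \<and> b i < int N) \<and>
      Uop N n b ` QCSS n C1 C2 = QCSS n C1 C2}"

definition wcomb :: "nat \<Rightarrow> (nat \<Rightarrow> nat \<Rightarrow> bool) \<Rightarrow> (nat \<Rightarrow> bool) \<Rightarrow> (nat \<Rightarrow> bool)" where
  "wcomb K w v = vsum {w i | i. i < K \<and> v i}"

definition logical_state ::
  "(nat \<Rightarrow> bool) set \<Rightarrow> nat \<Rightarrow> (nat \<Rightarrow> nat \<Rightarrow> bool) \<Rightarrow> (nat \<Rightarrow> bool) \<Rightarrow> qstate" where
  "logical_state C2 K w v =
     (\<lambda>x. (\<Sum>u\<in>C2. ket (vadd u (wcomb K w v)) x) / sqrt (real (card C2)))"

definition encode :: "(nat \<Rightarrow> bool) set \<Rightarrow> nat \<Rightarrow> (nat \<Rightarrow> nat \<Rightarrow> bool) \<Rightarrow> qop" where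
  "encode C2 K w \<psi> = (\<lambda>x. \<Sum>v\<in>vecs K. \<psi> v * logical_state C2 K w v x)"

definition logical_action ::
  "(nat \<Rightarrow> bool) set \<Rightarrow> nat \<Rightarrow> (nat \<Rightarrow> nat \<Rightarrow> bool) \<Rightarrow> qop \<Rightarrow> qop" where
  "logical_action C2 K w U \<psi> =
     (THE \<phi>. is_qstate K \<phi> \<and> encode C2 K w \<phi> = U (encode C2 K w \<psi>))"

definition CJU :: "nat \<Rightarrow> nat set \<Rightarrow> int \<Rightarrow> qop" where
  "CJU N J a \<psi> = (\<lambda>v. (if (\<forall>i\<in>J. v i) then opow N a else 1) * \<psi> v)"

definition aJb :: "nat \<Rightarrow> nat \<Rightarrow> (nat \<Rightarrow> nat \<Rightarrow> bool) \<Rightarrow> (nat \<Rightarrow> int) \<Rightarrow> nat set \<Rightarrow> int" where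
  "aJb N n w b J =
     ((-2) ^ (card J - 1) * ((\<Sum>i<n. b i * of_bool (\<forall>j\<in>J. w j i)) mod int N)) mod int N"

definition prod_ops :: "qop list \<Rightarrow> qop" where
  "prod_ops Us = foldr (\<circ>) Us id"

end

theory Submission
  imports Defs
begin

text \<open>U(b) is diagonal, with entry omega^(b.x) at |x>. Since U(b) maps Q to itself and every
  state of Q is invariant under X(u) for u in C2, this phase is constant on each coset
  c_v + C2, where c_v = sum_j v_j w_j is the coset carrying |v>_L; as distinct v give distinct
  cosets, the logical action is the diagonal operator with entry omega^(b.c_v) at |v>.
  Over the integers, the parity of a sum y_1 + ... + y_k of bits equals
  sum over nonempty J of (-2)^(|J|-1) prod_(j in J) y_j (expand prod_j (1 - 2 y_j)). Applied to
  each coordinate of c_v this gives b.c_v = sum_J (-2)^(|J|-1) v_J b.(w_j1 * ... * w_jh), i.e.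
  omega^(b.c_v) is the product of the phases of the gates C_J-U(a_J,b).\<close>

lemma opow_eq_cis:
  assumes "N > 0"
  shows "opow N a = cis (2 * pi * of_int a / real N)"
proof -
  let ?q = "a div int N" and ?r = "a mod int N"
  have "opow N a = cis (2 * pi * of_int ?r / real N)"
    using assms by (simp add: opow_def omega_def DeMoivre field_simps)
  also have "\<dots> = cis (2 * pi * of_int ?r / real N) * cis (2 * pi * of_int ?q)"
    by simp
  also have "\<dots> = cis (2 * pi * of_int a / real N)"
  proof -
    have "real_of_int a = of_int ?r + of_int ?q * real N"
      by (metis of_int_add of_int_mult of_int_of_nat_eq mod_div_mult_eq)
    then show ?thesis
      using assms by (simp add: cis_mult field_simps)
  qed
  finally show ?thesis .
qed

lemma opow_add: "N > 0 \<Longrightarrow> opow N (a + c) = opow N a * opow N c"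
  by (simp add: opow_eq_cis cis_mult add_divide_distrib distrib_left)

lemma prod_opow:
  assumes "N > 0" "finite A"
  shows "(\<Prod>x\<in>A. opow N (f x)) = opow N (\<Sum>x\<in>A. f x)"
  using assms(2) by induction (simp_all add: opow_add[OF assms(1)], simp add: opow_def)

lemma opow_mod [simp]: "opow N (a mod int N) = opow N a"
  by (simp add: opow_def)

lemma if_opow_1: "(if P then opow N a else 1) = opow N (a * of_bool P)"
  by (simp add: opow_def)

lemma sum_Pow_neg2_power:
  assumes "finite T"
  shows "(\<Sum>X\<in>Pow T. (-2) ^ card X) = ((-1) ^ card T :: 'a::comm_ring_1)"
proof -
  have "((-1) ^ card T :: 'a) = (\<Prod>x\<in>T. -2 + 1)"
    by simp
  also have "\<dots> = (\<Sum>X\<in>Pow T. (\<Prod>x\<in>X. -2) * (\<Prod>x\<in>T - X. 1))"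
    by (rule prod_add[OF assms])
  finally show ?thesis
    by simp
qed

lemma of_bool_odd_card_eq_sum_subsets:
  assumes "finite S"
  shows "of_bool (odd (card {j\<in>S. P j})) =
    (\<Sum>J | J \<subseteq> S \<and> J \<noteq> {}. (-2) ^ (card J - 1) * of_bool (\<forall>j\<in>J. P j) :: int)"
proof -
  let ?T = "{j\<in>S. P j}"
  have fin: "finite {J. J \<subseteq> S \<and> J \<noteq> {}}"
    using assms by (auto intro: finite_subset[of _ "Pow S"])
  have "(\<Sum>J | J \<subseteq> S \<and> J \<noteq> {}. (-2) ^ (card J - 1) * of_bool (\<forall>j\<in>J. P j) :: int)
      = (\<Sum>J\<in>Pow ?T - {{}}. (-2) ^ (card J - 1))"
    using fin by (intro sum.mono_neutral_cong_right) auto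
  also have "-2 * \<dots> = (\<Sum>J\<in>Pow ?T - {{}}. (-2) ^ card J)"
    unfolding sum_distrib_left
  proof (intro sum.cong refl)
    fix J assume "J \<in> Pow ?T - {{}}"
    then have "card J \<noteq> 0"
      using assms by (auto dest: finite_subset)
    then show "(-2 :: int) * (-2) ^ (card J - 1) = (-2) ^ card J"
      by (simp add: power_eq_if)
  qed
  also have "\<dots> = (-1) ^ card ?T - 1"
    using assms sum.remove[of "Pow ?T" "{}" "\<lambda>X. (-2 :: int) ^ card X"]
    by (simp add: sum_Pow_neg2_power)
  finally show ?thesis
    by (cases "even (card ?T)") (auto simp: algebra_simps)
qed

lemma finite_vecs: "finite (vecs n)"
proof (rule finite_subset)
  show "vecs n \<subseteq> (\<lambda>S i. i \<in> S) ` Pow {..<n}"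
  proof
    fix v assume "v \<in> vecs n"
    then have "v = (\<lambda>i. i \<in> {i. i < n \<and> v i})"
      by (auto simp: vecs_def not_less[symmetric])
    then show "v \<in> (\<lambda>S i. i \<in> S) ` Pow {..<n}"
      by blast
  qed
qed simp

lemma vadd_vzero [simp]: "vadd a vzero = a" "vadd vzero a = a"
  by (auto simp: vadd_def vzero_def)

lemma vadd_self [simp]: "vadd a a = vzero"
  by (auto simp: vadd_def vzero_def)

lemma vadd_vadd_cancel [simp]: "vadd (vadd a b) b = a" "vadd a (vadd a b) = b"
  by (auto simp: vadd_def)

lemma vadd_in_vecs: "a \<in> vecs n \<Longrightarrow> c \<in> vecs n \<Longrightarrow> vadd a c \<in> vecs n"
  by (auto simp: vecs_def vadd_def)

lemma vsum_symdiff: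
  assumes "finite A" "finite B"
  shows "vsum ((A - B) \<union> (B - A)) = vadd (vsum A) (vsum B)"
proof
  fix i
  let ?P = "{v :: nat \<Rightarrow> bool. v i}"
  let ?A = "A \<inter> ?P" and ?B = "B \<inter> ?P" and ?D = "((A - B) \<union> (B - A)) \<inter> ?P"
  have fin: "finite ?A" "finite ?B" "finite ?D" "finite (?A \<inter> ?B)"
    using assms by auto
  have "?A \<union> ?B = ?D \<union> (?A \<inter> ?B)" "?D \<inter> (?A \<inter> ?B) = {}"
    by auto
  then have "card ?A + card ?B = card ?D + 2 * card (?A \<inter> ?B)"
    using card_Un_Int[OF fin(1,2)] card_Un_disjoint[OF fin(3,4)] by simp
  then have "odd (card ?D) \<longleftrightarrow> odd (card ?A) \<noteq> odd (card ?B)"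
    by (metis even_add even_mult_iff even_numeral)
  moreover have restrict: "{v \<in> X. v i} = X \<inter> ?P" for X
    by auto
  ultimately show "vsum ((A - B) \<union> (B - A)) i = vadd (vsum A) (vsum B) i"
    unfolding vsum_def vadd_def restrict by simp
qed

lemma indep2D: "indep2 B \<Longrightarrow> finite S \<Longrightarrow> S \<subseteq> B \<Longrightarrow> vsum S = vzero \<Longrightarrow> S = {}"
  by (simp add: indep2_def)

lemma wcomb_eq_odd_card:
  assumes "inj_on w {..<K}"
  shows "wcomb K w v i = odd (card {j\<in>{..<K}. v j \<and> w j i})"
proof -
  have "{u \<in> {w j |j. j < K \<and> v j}. u i} = w ` {j\<in>{..<K}. v j \<and> w j i}"
    by blast
  moreover have "inj_on w {j\<in>{..<K}. v j \<and> w j i}"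
    using assms by (rule inj_on_subset) auto
  ultimately show ?thesis
    by (simp add: wcomb_def vsum_def card_image)
qed

definition Uphase :: "nat \<Rightarrow> nat \<Rightarrow> (nat \<Rightarrow> int) \<Rightarrow> (nat \<Rightarrow> bool) \<Rightarrow> complex" where
  "Uphase N n b x = (\<Prod>i<n. if x i then opow N (b i) else 1)"

lemma Uop_eq_Uphase: "Uop N n b \<psi> = (\<lambda>x. Uphase N n b x * \<psi> x)"
  by (simp add: Uop_def Uphase_def)

lemma Uphase_eq_opow: "N > 0 \<Longrightarrow> Uphase N n b x = opow N (\<Sum>i<n. b i * of_bool (x i))"
  unfolding Uphase_def if_opow_1 by (rule prod_opow) simp_all

lemma inner_wcomb_eq_sum_subsets:
  fixes b :: "nat \<Rightarrow> int"
  assumes "inj_on w {..<K}"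
  shows "(\<Sum>i<n. b i * of_bool (wcomb K w v i)) =
    (\<Sum>J | J \<subseteq> {..<K} \<and> J \<noteq> {}.
       (-2) ^ (card J - 1) * (\<Sum>i<n. b i * of_bool (\<forall>j\<in>J. w j i)) * of_bool (\<forall>j\<in>J. v j))"
proof -
  let ?F = "{J. J \<subseteq> {..<K} \<and> J \<noteq> {}}"
  let ?c = "\<lambda>J. (-2) ^ (card J - 1) * of_bool (\<forall>j\<in>J. v j) :: int"
  have "of_bool (wcomb K w v i) =
      (\<Sum>J\<in>?F. (-2) ^ (card J - 1) * of_bool (\<forall>j\<in>J. v j \<and> w j i) :: int)" for i
    unfolding wcomb_eq_odd_card[OF assms]
    by (rule of_bool_odd_card_eq_sum_subsets[where P = "\<lambda>j. v j \<and> w j i"]) simp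
  then have "(\<Sum>i<n. b i * of_bool (wcomb K w v i))
      = (\<Sum>i<n. b i * (\<Sum>J\<in>?F. (-2) ^ (card J - 1) * of_bool (\<forall>j\<in>J. v j \<and> w j i)))"
    by simp
  also have "\<dots> = (\<Sum>i<n. \<Sum>J\<in>?F. ?c J * (b i * of_bool (\<forall>j\<in>J. w j i)))"
    by (simp only: sum_distrib_left ball_conj_distrib of_bool_conj ac_simps)
  also have "\<dots> = (\<Sum>J\<in>?F. ?c J * (\<Sum>i<n. b i * of_bool (\<forall>j\<in>J. w j i)))"
    by (subst sum.swap) (simp only: sum_distrib_left)
  finally show ?thesis
    by (simp add: ac_simps)
qed

lemma opow_aJb:
  "opow N (aJb N n w b J) = opow N ((-2) ^ (card J - 1) * (\<Sum>i<n. b i * of_bool (\<forall>j\<in>J. w j i)))"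
  by (simp add: aJb_def mod_mult_right_eq)

lemma Uphase_wcomb:
  assumes "N > 0" "inj_on w {..<K}"
  shows "Uphase N n b (wcomb K w v) =
    (\<Prod>J | J \<subseteq> {..<K} \<and> J \<noteq> {}. if \<forall>j\<in>J. v j then opow N (aJb N n w b J) else 1)"
proof -
  let ?F = "{J. J \<subseteq> {..<K} \<and> J \<noteq> {}}"
  have "finite ?F"
    by (auto intro: finite_subset[of _ "Pow {..<K}"])
  have "(\<Prod>J\<in>?F. if \<forall>j\<in>J. v j then opow N (aJb N n w b J) else 1) =
      (\<Prod>J\<in>?F. opow N ((-2) ^ (card J - 1) * (\<Sum>i<n. b i * of_bool (\<forall>j\<in>J. w j i))
        * of_bool (\<forall>j\<in>J. v j)))"
    by (simp only: opow_aJb if_opow_1)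
  also have "\<dots> = opow N (\<Sum>i<n. b i * of_bool (wcomb K w v i))"
    by (simp only: prod_opow[OF assms(1) \<open>finite ?F\<close>] inner_wcomb_eq_sum_subsets[OF assms(2)])
  finally show ?thesis
    by (simp add: Uphase_eq_opow[OF assms(1)])
qed

lemma prod_ops_CJU:
  "distinct Js \<Longrightarrow> prod_ops (map (\<lambda>J. CJU N J (a J)) Js) \<psi> =
    (\<lambda>v. (\<Prod>J\<in>set Js. if \<forall>i\<in>J. v i then opow N (a J) else 1) * \<psi> v)"
  by (induction Js) (simp_all add: prod_ops_def CJU_def mult.assoc)

lemma QCSS_vadd_invariant:
  assumes "\<psi> \<in> QCSS n C1 C2" "u \<in> C2"
  shows "\<psi> (vadd x u) = \<psi> x"
proof -
  have "vzero \<in> dual_code n C1"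
    by (simp add: dual_code_def vecs_def vzero_def)
  then have "Xop u (Zop n vzero \<psi>) = \<psi>"
    using assms by (auto simp: QCSS_def)
  moreover have "Zop n vzero \<psi> = \<psi>"
    by (simp add: Zop_def vzero_def)
  ultimately show ?thesis
    by (metis Xop_def)
qed

locale css_encoding =
  fixes n K :: nat and C1 C2 B1 B2 :: "(nat \<Rightarrow> bool) set" and w :: "nat \<Rightarrow> nat \<Rightarrow> bool"
  assumes code1: "linear_code n C1" and code2: "linear_code n C2" and C2_subset_C1: "C2 \<subseteq> C1"
    and basis1: "is_basis2 B1 C1" and basis2: "is_basis2 B2 C2" and B2_subset_B1: "B2 \<subseteq> B1"
    and inj_w: "inj_on w {..<K}" and image_w: "B1 - B2 = w ` {..<K}"
begin

lemma C1_subset_vecs: "C1 \<subseteq> vecs n" and C2_subset_vecs: "C2 \<subseteq> vecs n"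
  using code1 code2 by (simp_all add: linear_code_def)

lemma vzero_in_C2: "vzero \<in> C2"
  using code2 by (simp add: linear_code_def)

lemma vadd_in_C1: "u \<in> C1 \<Longrightarrow> u' \<in> C1 \<Longrightarrow> vadd u u' \<in> C1"
  and vadd_in_C2: "u \<in> C2 \<Longrightarrow> u' \<in> C2 \<Longrightarrow> vadd u u' \<in> C2"
  using code1 code2 by (simp_all add: linear_code_def)

lemma finite_C2: "finite C2"
  using C2_subset_vecs finite_vecs by (rule finite_subset)

lemma sqrt_card_C2_nonzero: "sqrt (real (card C2)) \<noteq> 0"
  using finite_C2 vzero_in_C2 by auto

lemma wcomb_in_C1: "wcomb K w v \<in> C1"
proof -
  have "{w i | i. i < K \<and> v i} \<subseteq> B1"
    using image_w by auto
  then show ?thesis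
    using basis1 by (auto simp: wcomb_def is_basis2_def span2_def)
qed

lemma logical_state_eq:
  "logical_state C2 K w v x = of_bool (vadd x (wcomb K w v) \<in> C2) / sqrt (real (card C2))"
proof -
  have "(\<Sum>u\<in>C2. ket (vadd u (wcomb K w v)) x) = (\<Sum>u\<in>C2. if u = vadd x (wcomb K w v) then 1 else 0)"
    by (rule sum.cong) (auto simp: ket_def vadd_def)
  then show ?thesis
    using finite_C2 by (simp add: logical_state_def)
qed

(* B1 is independent and the w j lie outside B2, which spans C2. *)
lemma wcomb_coset_inj:
  assumes "v \<in> vecs K" "v' \<in> vecs K" "vadd (wcomb K w v) (wcomb K w v') \<in> C2"
  shows "v = v'"
proof -
  let ?A = "{w i | i. i < K \<and> v i}" and ?B = "{w i | i. i < K \<and> v' i}"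
  let ?D = "{w i | i. i < K \<and> v i \<noteq> v' i}"
  have "w i = w j \<Longrightarrow> i < K \<Longrightarrow> j < K \<Longrightarrow> i = j" for i j
    using inj_w by (auto dest: inj_onD)
  then have "(?A - ?B) \<union> (?B - ?A) = ?D"
    by blast
  then have "vsum ?D \<in> C2"
    using assms(3) vsum_symdiff[of ?A ?B] by (simp add: wcomb_def)
  then obtain S where S: "finite S" "S \<subseteq> B2" "vsum ?D = vsum S"
    using basis2 by (auto simp: is_basis2_def span2_def)
  have D: "?D \<subseteq> B1 - B2"
    using image_w by auto
  with S(2) have "(?D - S) \<union> (S - ?D) = ?D \<union> S"
    by auto
  moreover have "finite ?D"
    by simp
  ultimately have "vsum (?D \<union> S) = vzero"
    using vsum_symdiff[of ?D S] S by simp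
  moreover have "finite (?D \<union> S)" "?D \<union> S \<subseteq> B1"
    using \<open>finite ?D\<close> S(1,2) D B2_subset_B1 by auto
  moreover have "indep2 B1"
    using basis1 by (simp add: is_basis2_def)
  ultimately have "?D \<union> S = {}"
    using indep2D by blast
  then have "v i = v' i" if "i < K" for i
    using that by auto
  moreover have "v i = v' i" if "i \<ge> K" for i
    using that assms(1,2) by (simp add: vecs_def)
  ultimately show ?thesis
    by (intro ext) (meson not_less)
qed

lemma logical_state_in_QCSS: "logical_state C2 K w v \<in> QCSS n C1 C2"
proof -
  let ?c = "wcomb K w v"
  have "is_qstate n (logical_state C2 K w v)"
    unfolding is_qstate_def
  proof (intro allI impI)
    fix x assume x: "x \<notin> vecs n"
    have "vadd (vadd x ?c) ?c \<in> vecs n" if "vadd x ?c \<in> C2"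
      using that vadd_in_vecs C2_subset_vecs C1_subset_vecs wcomb_in_C1 by blast
    with x show "logical_state C2 K w v x = 0"
      by (auto simp: logical_state_eq)
  qed
  moreover have "Xop u (Zop n v' (logical_state C2 K w v)) = logical_state C2 K w v"
    if u: "u \<in> C2" and v': "v' \<in> dual_code n C1" for u v'
  proof
    fix x
    have "vadd (vadd x u) ?c = vadd (vadd x ?c) u"
      by (auto simp: vadd_def)
    then have coset: "vadd (vadd x u) ?c \<in> C2 \<longleftrightarrow> vadd x ?c \<in> C2"
      using vadd_in_C2[OF _ u] vadd_vadd_cancel(1) by metis
    have "even (card {i. i < n \<and> v' i \<and> vadd x u i})" if "vadd (vadd x u) ?c \<in> C2"
    proof -
      have "vadd (vadd (vadd x u) ?c) ?c \<in> C1"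
        using that C2_subset_C1 wcomb_in_C1 vadd_in_C1 by blast
      then show ?thesis
        using v' by (auto simp: dual_code_def)
    qed
    then show "Xop u (Zop n v' (logical_state C2 K w v)) x = logical_state C2 K w v x"
      using coset by (auto simp: Xop_def Zop_def logical_state_eq)
  qed
  ultimately show ?thesis
    by (simp add: QCSS_def)
qed

(* The only use of b \<in> H_N: U(b) maps |v>_L into Q, whose states are X(u)-invariant for u in C2. *)
lemma Uphase_coset_const:
  assumes "b \<in> H_N N n C1 C2" "vadd x (wcomb K w v) \<in> C2"
  shows "Uphase N n b x = Uphase N n b (wcomb K w v)"
proof -
  let ?c = "wcomb K w v" and ?\<psi> = "logical_state C2 K w v"
  have "Uop N n b ?\<psi> \<in> QCSS n C1 C2"
    using assms(1) logical_state_in_QCSS by (auto simp: H_N_def)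
  then have "Uop N n b ?\<psi> (vadd ?c (vadd x ?c)) = Uop N n b ?\<psi> ?c"
    using assms(2) by (rule QCSS_vadd_invariant)
  moreover have "vadd ?c (vadd x ?c) = x"
    by (auto simp: vadd_def)
  moreover have "?\<psi> x = ?\<psi> ?c"
    using assms(2) vzero_in_C2 by (simp add: logical_state_eq)
  moreover have "?\<psi> ?c \<noteq> 0"
    using vzero_in_C2 sqrt_card_C2_nonzero by (simp add: logical_state_eq)
  ultimately show ?thesis
    by (simp add: Uop_eq_Uphase)
qed

lemma Uop_encode:
  assumes "b \<in> H_N N n C1 C2"
  shows "Uop N n b (encode C2 K w \<psi>) = encode C2 K w (\<lambda>v. Uphase N n b (wcomb K w v) * \<psi> v)"
proof
  fix x
  have phase: "Uphase N n b x * (\<psi> v * logical_state C2 K w v x) =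
      Uphase N n b (wcomb K w v) * \<psi> v * logical_state C2 K w v x" for v
    using Uphase_coset_const[OF assms, of x v] by (auto simp: logical_state_eq)
  show "Uop N n b (encode C2 K w \<psi>) x = encode C2 K w (\<lambda>v. Uphase N n b (wcomb K w v) * \<psi> v) x"
    unfolding Uop_eq_Uphase encode_def sum_distrib_left by (intro sum.cong refl phase)
qed

lemma encode_wcomb:
  assumes "v0 \<in> vecs K"
  shows "encode C2 K w \<phi> (wcomb K w v0) = \<phi> v0 / sqrt (real (card C2))"
proof -
  have "logical_state C2 K w v (wcomb K w v0) = of_bool (v = v0) / sqrt (real (card C2))"
    if "v \<in> vecs K" for v
    using wcomb_coset_inj[OF assms that] vzero_in_C2 by (auto simp: logical_state_eq)
  then have "encode C2 K w \<phi> (wcomb K w v0) = (\<Sum>v\<in>vecs K. if v = v0 then \<phi> v0 / sqrt (real (card C2)) else 0)"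
    unfolding encode_def by (intro sum.cong) auto
  also have "\<dots> = \<phi> v0 / sqrt (real (card C2))"
    using assms finite_vecs by simp
  finally show ?thesis .
qed

lemma encode_inj:
  assumes "is_qstate K \<phi>1" "is_qstate K \<phi>2" "encode C2 K w \<phi>1 = encode C2 K w \<phi>2"
  shows "\<phi>1 = \<phi>2"
proof
  fix v
  show "\<phi>1 v = \<phi>2 v"
  proof (cases "v \<in> vecs K")
    case True
    then show ?thesis
      using encode_wcomb[OF True, of \<phi>1] encode_wcomb[OF True, of \<phi>2] assms(3) sqrt_card_C2_nonzero
      by simp
  next
    case False
    then show ?thesis
      using assms(1,2) by (simp add: is_qstate_def)
  qed
qed

lemma logical_action_Uop:
  assumes "b \<in> H_N N n C1 C2" "is_qstate K \<psi>"
  shows "logical_action C2 K w (Uop N n b) \<psi> = (\<lambda>v. Uphase N n b (wcomb K w v) * \<psi> v)"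
  unfolding logical_action_def
proof (rule the_equality)
  let ?\<phi> = "\<lambda>v. Uphase N n b (wcomb K w v) * \<psi> v"
  show "is_qstate K ?\<phi> \<and> encode C2 K w ?\<phi> = Uop N n b (encode C2 K w \<psi>)"
    using assms by (simp add: is_qstate_def Uop_encode)
  then show "\<phi> = ?\<phi>" if "is_qstate K \<phi> \<and> encode C2 K w \<phi> = Uop N n b (encode C2 K w \<psi>)" for \<phi>
    using that encode_inj by metis
qed

end

theorem proposition3p13:
  fixes l n K N :: nat and C1 C2 B1 B2 :: "(nat \<Rightarrow> bool) set"
    and w :: "nat \<Rightarrow> nat \<Rightarrow> bool" and b :: "nat \<Rightarrow> int"
    and Js :: "nat set list"
  assumes "l \<ge> 1" and "N = 2 ^ l"
    and "linear_code n C1" and "linear_code n C2" and "C2 \<subseteq> C1"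
    and "is_basis2 B1 C1" and "is_basis2 B2 C2" and "B2 \<subseteq> B1"
    and "inj_on w {..<K}" and "B1 - B2 = w ` {..<K}"
    and "b \<in> H_N N n C1 C2"
    and "distinct Js" and "set Js = {J. J \<subseteq> {..<K} \<and> J \<noteq> {}}"
    and "sorted (map card Js)"
  shows "\<forall>\<psi>. is_qstate K \<psi> \<longrightarrow>
     logical_action C2 K w (Uop N n b) \<psi> =
     prod_ops (map (\<lambda>J. CJU N J (aJb N n w b J)) Js) \<psi>"
proof (intro allI impI)
  fix \<psi> assume "is_qstate K \<psi>"
  interpret css_encoding n K C1 C2 B1 B2 w
    using assms(3-10) by unfold_locales
  have "N > 0"
    using assms(2) by simp
  show "logical_action C2 K w (Uop N n b) \<psi> = prod_ops (map (\<lambda>J. CJU N J (aJb N n w b J)) Js) \<psi>"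
    by (simp add: logical_action_Uop[OF assms(11) \<open>is_qstate K \<psi>\<close>] prod_ops_CJU[OF assms(12)]
        assms(13) Uphase_wcomb[OF \<open>N > 0\<close> assms(9)])
qed

end
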